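(* Let $d_1,\dots,d_n$ be positive integers with $d=\sum_id_i\ge2$, and let $c_0,c_1\in\mathbb{R}^n$ (in the paper $c_0=(\ln a_1,\dots,\ln a_n)$, $c_1=(\ln b_1,\dots,\ln b_n)$ for positive $a_i,b_i$). There exists a bounded convex open set $\Omega\subset\mathbb{R}\times C^1([0,1];\mathbb{R}^n)$ containing every pair $(\lambda,y)$ that, for some $p_3\in[0,1]$, satisfies $$\sum_{i=1}^nd_i\Big(-y_i'\sum_{k=1}^nd_ky_k'+y_i'^2\Big)\Big|_{r=0}=(d-1)\lambda,$$ $$-y_i'\sum_{k=1}^nd_ky_k'-y_i''=\lambda\ \text{ on }[0,1]\ (i=1,\dots,n),\qquad y(0)=p_3c_0,\quad y(1)=p_3c_1.$$
   Context: $\mathbb{R}\times C^1([0,1];\mathbb{R}^n)$ is the Banach space with the product norm (absolute value on $\mathbb{R}$, $C^1$ norm on the second factor); solutions $y$ are $C^2$. *)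

theory Defs
  imports "HOL-Analysis.Analysis"
begin

text \<open>Elements are represented
  by functions real => real^'n that are C^1 on [0,1] (one-sided derivatives at the
  endpoints) and normalised to 0 outside [0,1], so that each element of the
  space has a unique representative.\<close>

definition C1 :: "(real \<Rightarrow> real ^ 'n) \<Rightarrow> bool" where
  "C1 y \<longleftrightarrow>
     (\<exists>y'. (\<forall>t\<in>{0..1}. (y has_vector_derivative y' t) (at t within {0..1}))
           \<and> continuous_on {0..1} y')
     \<and> (\<forall>t. t \<notin> {0..1} \<longrightarrow> y t = 0)"

definition c1norm :: "(real \<Rightarrow> real ^ 'n) \<Rightarrow> real" where
  "c1norm y = (SUP t\<in>{0..1}. norm (y t))
              + (SUP t\<in>{0..1}. norm (vector_derivative y (at t within {0..1})))"

definition pnorm :: "real \<times> (real \<Rightarrow> real ^ 'n) \<Rightarrow> real" where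
  "pnorm p = \<bar>fst p\<bar> + c1norm (snd p)"

definition pdiff :: "real \<times> (real \<Rightarrow> real ^ 'n) \<Rightarrow> real \<times> (real \<Rightarrow> real ^ 'n)
                     \<Rightarrow> real \<times> (real \<Rightarrow> real ^ 'n)" where
  "pdiff p q = (fst p - fst q, (\<lambda>t. snd p t - snd q t))"

definition space :: "(real \<times> (real \<Rightarrow> real ^ 'n)) set" where
  "space = UNIV \<times> {y. C1 y}"

definition bounded_X :: "(real \<times> (real \<Rightarrow> real ^ 'n)) set \<Rightarrow> bool" where
  "bounded_X S \<longleftrightarrow> (\<exists>B. \<forall>p\<in>S. pnorm p \<le> B)"

definition convex_X :: "(real \<times> (real \<Rightarrow> real ^ 'n)) set \<Rightarrow> bool" where
  "convex_X S \<longleftrightarrow> (\<forall>p\<in>S. \<forall>q\<in>S. \<forall>u::real. 0 \<le> u \<and> u \<le> 1 \<longrightarrow>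
      ((1 - u) * fst p + u * fst q, (\<lambda>t. (1 - u) *\<^sub>R snd p t + u *\<^sub>R snd q t)) \<in> S)"

definition open_X :: "(real \<times> (real \<Rightarrow> real ^ 'n)) set \<Rightarrow> bool" where
  "open_X S \<longleftrightarrow> (\<forall>p\<in>S. \<exists>e>0. \<forall>q\<in>space. pnorm (pdiff q p) < e \<longrightarrow> q \<in> S)"

end

theory Submission
  imports Defs
begin

text \<open>With D = \<Sum> d_i, put s = \<Sum> d_k y_k' and P = \<Sum> d_k y_k, so that P' = s and the
  equations give the Riccati equation s' = - s^2 - D \<lambda>.  The quantity
  Q = \<Sum> d_i (y_i')^2 - s^2 - (D - 1) \<lambda> satisfies Q' = - 2 s Q and vanishes at 0 by the
  boundary condition, hence everywhere; likewise u_i = D y_i' - s satisfies u_i' = - s u_i, so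
  each u_i keeps its sign.  Therefore G = \<Sum> d_i sgn (u_i 0) (D y_i - P) has derivative
  g = \<Sum> d_i \<bar>u_i\<bar> \<ge> 0, its total increase is at most 2 D^2 \<parallel>c_1 - c_0\<parallel>, and Q = 0 gives
  g^2 \<ge> s^2 + D \<lambda>.  At a mean value point of P we have \<bar>s\<bar> \<le> D \<parallel>c_1 - c_0\<parallel>, which
  bounds \<lambda> from below, while g \<ge> \<surd>\<lambda> bounds it from above.  Then \<bar>(ln (1 + s^2))'\<bar> is at
  most a constant times g + 1, which integrates to a bound on s because \<integral>g is the increase
  of G, and Q = 0 turns it into a bound on y'.  So all solutions lie in one ball of
  \<real> \<times> C^1, which is bounded, convex and open.\<close>

lemma has_vector_derivative_vec_nth:
  fixes f :: "real \<Rightarrow> real ^ 'n"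
  assumes "(f has_vector_derivative f') F"
  shows "((\<lambda>t. f t $ i) has_real_derivative f' $ i) F"
proof -
  have "(\<lambda>h. (h *\<^sub>R f') $ i) = (*) (f' $ i)" by (auto simp: fun_eq_iff)
  then show ?thesis
    using bounded_linear.has_derivative[OF bounded_linear_vec_nth, of f "\<lambda>h. h *\<^sub>R f'" F i] assms
    by (simp add: has_field_derivative_def has_vector_derivative_def)
qed

lemma deriv_nonneg_imp_le:
  fixes f :: "real \<Rightarrow> real"
  assumes "a \<le> b" "{a..b} \<subseteq> S"
    and f': "\<And>x. x \<in> {a..b} \<Longrightarrow> (f has_real_derivative f' x) (at x within S)"
    and "\<And>x. x \<in> {a..b} \<Longrightarrow> 0 \<le> f' x"
  shows "f a \<le> f b"
proof -
  have "(f has_derivative (\<lambda>h. f' x * h)) (at x within {a..b})" if "a \<le> x" "x \<le> b" for x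
    using DERIV_subset[OF f' assms(2)] that by (simp add: has_field_derivative_def)
  then obtain x where "x \<in> {a..b}" "f b - f a = f' x * (b - a)"
    using mvt_very_simple[OF \<open>a \<le> b\<close>, of f "\<lambda>x h. f' x * h"] by blast
  then show ?thesis using assms(1,4) by (metis diff_ge_0_iff_ge mult_nonneg_nonneg)
qed

lemma abs_increment_le_increment:
  fixes f g :: "real \<Rightarrow> real"
  assumes "a \<le> b" "{a..b} \<subseteq> S"
    and "\<And>x. x \<in> {a..b} \<Longrightarrow> (f has_real_derivative f' x) (at x within S)"
    and "\<And>x. x \<in> {a..b} \<Longrightarrow> (g has_real_derivative g' x) (at x within S)"
    and "\<And>x. x \<in> {a..b} \<Longrightarrow> \<bar>f' x\<bar> \<le> g' x"
  shows "\<bar>f b - f a\<bar> \<le> g b - g a"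
proof -
  have "0 \<le> g' x - f' x" "0 \<le> g' x + f' x" if "x \<in> {a..b}" for x
    using assms(5)[OF that] by linarith+
  then have "g a - f a \<le> g b - f b" "g a + f a \<le> g b + f b"
    by (auto intro!: deriv_nonneg_imp_le[OF assms(1,2)] derivative_eq_intros assms(3,4))
  then show ?thesis by linarith
qed

lemma linear_ode_exp_invariant:
  fixes f p a :: "real \<Rightarrow> real"
  assumes "convex S"
    and "\<And>x. x \<in> S \<Longrightarrow> (f has_real_derivative - a x * f x) (at x within S)"
    and "\<And>x. x \<in> S \<Longrightarrow> (p has_real_derivative a x) (at x within S)"
    and "x \<in> S" "x0 \<in> S"
  shows "f x * exp (p x) = f x0 * exp (p x0)"
proof -
  have "((\<lambda>x. f x * exp (p x)) has_real_derivative 0) (at x within S)" if "x \<in> S" for x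
    using assms(2,3)[OF that] by (auto intro!: derivative_eq_intros simp: algebra_simps)
  then obtain c where "\<forall>x\<in>S. f x * exp (p x) = c"
    using has_field_derivative_zero_constant[OF assms(1)] by blast
  then show ?thesis using assms(4,5) by simp
qed

lemma C1E:
  assumes "C1 y"
  obtains y' where "\<And>t. t \<in> {0..1} \<Longrightarrow> (y has_vector_derivative y' t) (at t within {0..1})"
    and "continuous_on {0..1} y'" and "\<And>t. t \<notin> {0..1} \<Longrightarrow> y t = 0"
  using assms unfolding C1_def by blast

lemma vector_derivative_within_unit_interval:
  fixes y :: "real \<Rightarrow> 'a::euclidean_space"
  assumes "(y has_vector_derivative v) (at t within {0..1})" and "t \<in> {0..1}"
  shows "vector_derivative y (at t within {0..1}) = v"
  using vector_derivative_within_closed_interval[of 0 1 t y v] assms by simp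

lemma bdd_above_norm_continuous_on_unit_interval:
  fixes f :: "real \<Rightarrow> 'a::real_normed_vector"
  assumes "continuous_on {0..1} f"
  shows "bdd_above ((\<lambda>t. norm (f t)) ` {0..1})"
proof -
  have "compact ((\<lambda>t. norm (f t)) ` {0..1})"
    using assms by (intro compact_continuous_image continuous_intros) auto
  then show ?thesis by (intro bounded_imp_bdd_above compact_imp_bounded)
qed

lemma C1_bdd_above:
  assumes "C1 y"
  shows "bdd_above ((\<lambda>t. norm (y t)) ` {0..1})"
    and "bdd_above ((\<lambda>t. norm (vector_derivative y (at t within {0..1}))) ` {0..1})"
proof -
  obtain y' where y': "\<And>t. t \<in> {0..1} \<Longrightarrow> (y has_vector_derivative y' t) (at t within {0..1})"
    and cont: "continuous_on {0..1} y'"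
    using C1E[OF assms] by blast
  have "continuous_on {0..1} y"
    using y' has_vector_derivative_continuous continuous_on_eq_continuous_within by blast
  then show "bdd_above ((\<lambda>t. norm (y t)) ` {0..1})"
    by (rule bdd_above_norm_continuous_on_unit_interval)
  have "(\<lambda>t. norm (vector_derivative y (at t within {0..1}))) ` {0..1} = (\<lambda>t. norm (y' t)) ` {0..1}"
    using vector_derivative_within_unit_interval[OF y'] by (intro image_cong) auto
  then show "bdd_above ((\<lambda>t. norm (vector_derivative y (at t within {0..1}))) ` {0..1})"
    using bdd_above_norm_continuous_on_unit_interval[OF cont] by simp
qed

lemma cSUP_lincomb_le:
  fixes h f g :: "'a \<Rightarrow> real"
  assumes "A \<noteq> {}" "bdd_above (f ` A)" "bdd_above (g ` A)" "0 \<le> a" "0 \<le> b"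
    and "\<And>t. t \<in> A \<Longrightarrow> h t \<le> a * f t + b * g t"
  shows "(SUP t\<in>A. h t) \<le> a * (SUP t\<in>A. f t) + b * (SUP t\<in>A. g t)"
proof (rule cSUP_least[OF assms(1)])
  fix t assume "t \<in> A"
  then have "a * f t + b * g t \<le> a * (SUP t\<in>A. f t) + b * (SUP t\<in>A. g t)"
    using assms(2-5) by (intro add_mono mult_left_mono cSUP_upper) auto
  then show "h t \<le> a * (SUP t\<in>A. f t) + b * (SUP t\<in>A. g t)"
    using assms(6)[OF \<open>t \<in> A\<close>] by linarith
qed

lemma
  assumes "C1 y" and "C1 z"
  shows C1_lincomb: "C1 (\<lambda>t. a *\<^sub>R y t + b *\<^sub>R z t)"
    and c1norm_lincomb_le:
      "c1norm (\<lambda>t. a *\<^sub>R y t + b *\<^sub>R z t) \<le> \<bar>a\<bar> * c1norm y + \<bar>b\<bar> * c1norm z"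
proof -
  let ?r = "\<lambda>t. a *\<^sub>R y t + b *\<^sub>R z t"
  obtain y' where y': "\<And>t. t \<in> {0..1} \<Longrightarrow> (y has_vector_derivative y' t) (at t within {0..1})"
    "continuous_on {0..1} y'" "\<And>t. t \<notin> {0..1} \<Longrightarrow> y t = 0"
    using C1E[OF assms(1)] by blast
  obtain z' where z': "\<And>t. t \<in> {0..1} \<Longrightarrow> (z has_vector_derivative z' t) (at t within {0..1})"
    "continuous_on {0..1} z'" "\<And>t. t \<notin> {0..1} \<Longrightarrow> z t = 0"
    using C1E[OF assms(2)] by blast
  have r': "(?r has_vector_derivative a *\<^sub>R y' t + b *\<^sub>R z' t) (at t within {0..1})"
    if "t \<in> {0..1}" for t
    using y'(1)[OF that] z'(1)[OF that] by (auto intro!: derivative_eq_intros)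
  show "C1 ?r"
    unfolding C1_def using r' y'(2,3) z'(2,3)
    by (auto intro!: exI[of _ "\<lambda>t. a *\<^sub>R y' t + b *\<^sub>R z' t"] continuous_intros)
  have "(SUP t\<in>{0..1}. norm (?r t))
      \<le> \<bar>a\<bar> * (SUP t\<in>{0..1}. norm (y t)) + \<bar>b\<bar> * (SUP t\<in>{0..1}. norm (z t))"
    by (rule cSUP_lincomb_le[OF _ C1_bdd_above(1)[OF assms(1)] C1_bdd_above(1)[OF assms(2)]])
      (auto intro!: order_trans[OF norm_triangle_ineq])
  moreover have "(SUP t\<in>{0..1}. norm (vector_derivative ?r (at t within {0..1})))
      \<le> \<bar>a\<bar> * (SUP t\<in>{0..1}. norm (vector_derivative y (at t within {0..1})))
        + \<bar>b\<bar> * (SUP t\<in>{0..1}. norm (vector_derivative z (at t within {0..1})))"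
  proof (rule cSUP_lincomb_le[OF _ C1_bdd_above(2)[OF assms(1)] C1_bdd_above(2)[OF assms(2)]])
    fix t :: real assume "t \<in> {0..1}"
    then show "norm (vector_derivative ?r (at t within {0..1}))
        \<le> \<bar>a\<bar> * norm (vector_derivative y (at t within {0..1}))
          + \<bar>b\<bar> * norm (vector_derivative z (at t within {0..1}))"
      using vector_derivative_within_unit_interval[OF r'] vector_derivative_within_unit_interval[OF y'(1)]
        vector_derivative_within_unit_interval[OF z'(1)] norm_triangle_ineq[of "a *\<^sub>R y' t" "b *\<^sub>R z' t"]
      by simp
  qed auto
  ultimately show "c1norm ?r \<le> \<bar>a\<bar> * c1norm y + \<bar>b\<bar> * c1norm z"
    unfolding c1norm_def by (simp add: algebra_simps)
qed

lemma
  assumes "p \<in> space" and "q \<in> space"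
  shows lincomb_in_space: "(a * fst p + b * fst q, \<lambda>t. a *\<^sub>R snd p t + b *\<^sub>R snd q t) \<in> space"
    and pnorm_lincomb_le:
      "pnorm (a * fst p + b * fst q, \<lambda>t. a *\<^sub>R snd p t + b *\<^sub>R snd q t)
        \<le> \<bar>a\<bar> * pnorm p + \<bar>b\<bar> * pnorm q"
proof -
  have C1: "C1 (snd p)" "C1 (snd q)" using assms by (auto simp: space_def)
  show "(a * fst p + b * fst q, \<lambda>t. a *\<^sub>R snd p t + b *\<^sub>R snd q t) \<in> space"
    using C1_lincomb[OF C1] by (simp add: space_def)
  have "\<bar>a * fst p + b * fst q\<bar> \<le> \<bar>a\<bar> * \<bar>fst p\<bar> + \<bar>b\<bar> * \<bar>fst q\<bar>"
    by (metis abs_mult abs_triangle_ineq)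
  then show "pnorm (a * fst p + b * fst q, \<lambda>t. a *\<^sub>R snd p t + b *\<^sub>R snd q t)
      \<le> \<bar>a\<bar> * pnorm p + \<bar>b\<bar> * pnorm q"
    using c1norm_lincomb_le[OF C1, of a b] unfolding pnorm_def by (simp add: algebra_simps)
qed

definition pball :: "real \<Rightarrow> (real \<times> (real \<Rightarrow> real ^ 'n)) set" where
  "pball R = {p \<in> space. pnorm p < R}"

lemma bounded_X_pball: "bounded_X (pball R)"
  unfolding bounded_X_def pball_def by (auto intro!: exI[of _ R])

lemma convex_X_pball: "convex_X (pball R :: (real \<times> (real \<Rightarrow> real ^ 'n)) set)"
  unfolding convex_X_def
proof (intro ballI allI impI)
  fix p q :: "real \<times> (real \<Rightarrow> real ^ 'n)" and u :: real
  assume p: "p \<in> pball R" and q: "q \<in> pball R" and u: "0 \<le> u \<and> u \<le> 1"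
  then have "pnorm ((1 - u) * fst p + u * fst q, \<lambda>t. (1 - u) *\<^sub>R snd p t + u *\<^sub>R snd q t)
      \<le> (1 - u) * pnorm p + u * pnorm q"
    using pnorm_lincomb_le[of p q "1 - u" u] by (auto simp: pball_def)
  also have "\<dots> < R"
    using p q u convex_bound_lt[of "pnorm p" R "pnorm q" "1 - u" u] by (auto simp: pball_def)
  finally show "((1 - u) * fst p + u * fst q, \<lambda>t. (1 - u) *\<^sub>R snd p t + u *\<^sub>R snd q t) \<in> pball R"
    using p q lincomb_in_space[of p q "1 - u" u] by (auto simp: pball_def)
qed

lemma open_X_pball: "open_X (pball R :: (real \<times> (real \<Rightarrow> real ^ 'n)) set)"
  unfolding open_X_def
proof (intro ballI)
  fix p :: "real \<times> (real \<Rightarrow> real ^ 'n)" assume p: "p \<in> pball R"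
  show "\<exists>e>0. \<forall>q\<in>space. pnorm (pdiff q p) < e \<longrightarrow> q \<in> pball R"
  proof (intro exI[of _ "R - pnorm p"] conjI ballI impI)
    show "0 < R - pnorm p" using p by (simp add: pball_def)
    fix q :: "real \<times> (real \<Rightarrow> real ^ 'n)"
    assume q: "q \<in> space" and close: "pnorm (pdiff q p) < R - pnorm p"
    have p_space: "p \<in> space" using p by (simp add: pball_def)
    have diff_space: "pdiff q p \<in> space"
      using lincomb_in_space[OF q p_space, of 1 "-1"] by (simp add: pdiff_def)
    have "q = (1 * fst (pdiff q p) + 1 * fst p, \<lambda>t. 1 *\<^sub>R snd (pdiff q p) t + 1 *\<^sub>R snd p t)"
      by (simp add: pdiff_def)
    then have "pnorm q \<le> pnorm (pdiff q p) + pnorm p"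
      using pnorm_lincomb_le[OF diff_space p_space, of 1 1] by simp
    then show "q \<in> pball R" using q close by (simp add: pball_def)
  qed
qed

locale bvp_solution =
  fixes d :: "'n::finite \<Rightarrow> nat" and lam :: real and y y' y'' :: "real \<Rightarrow> real ^ 'n"
  assumes d_pos: "\<And>i. 0 < d i"
    and sum_d_ge_2: "2 \<le> (\<Sum>i\<in>UNIV. d i)"
    and y_deriv: "\<And>t. t \<in> {0..1} \<Longrightarrow> (y has_vector_derivative y' t) (at t within {0..1})"
    and y'_deriv: "\<And>t. t \<in> {0..1} \<Longrightarrow> (y' has_vector_derivative y'' t) (at t within {0..1})"
    and ode: "\<And>t i. t \<in> {0..1} \<Longrightarrow>
      - (y' t $ i) * (\<Sum>k\<in>UNIV. real (d k) * y' t $ k) - y'' t $ i = lam"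
    and boundary_0: "(\<Sum>i\<in>UNIV. real (d i) *
      (- (y' 0 $ i) * (\<Sum>k\<in>UNIV. real (d k) * y' 0 $ k) + (y' 0 $ i)^2))
      = (real (\<Sum>i\<in>UNIV. d i) - 1) * lam"
begin

definition D :: real where "D = real (\<Sum>i\<in>UNIV. d i)"

definition s :: "real \<Rightarrow> real" where "s t = (\<Sum>k\<in>UNIV. real (d k) * y' t $ k)"

definition P :: "real \<Rightarrow> real" where "P t = (\<Sum>k\<in>UNIV. real (d k) * y t $ k)"

definition Q :: "real \<Rightarrow> real" where
  "Q t = (\<Sum>i\<in>UNIV. real (d i) * (y' t $ i)^2) - (s t)^2 - (D - 1) * lam"

definition u :: "'n \<Rightarrow> real \<Rightarrow> real" where "u i t = D * y' t $ i - s t"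

definition G :: "real \<Rightarrow> real" where
  "G t = (\<Sum>i\<in>UNIV. real (d i) * sgn (u i 0) * (D * y t $ i - P t))"

definition g :: "real \<Rightarrow> real" where "g t = (\<Sum>i\<in>UNIV. real (d i) * \<bar>u i t\<bar>)"

lemma D_eq_sum: "D = (\<Sum>i\<in>UNIV. real (d i))"
  by (simp add: D_def)

lemma D_ge_2: "2 \<le> D"
  using sum_d_ge_2 unfolding D_def by (metis of_nat_le_iff of_nat_numeral)

lemma y_component_deriv:
  "t \<in> {0..1} \<Longrightarrow> ((\<lambda>t. y t $ i) has_real_derivative y' t $ i) (at t within {0..1})"
  by (rule has_vector_derivative_vec_nth[OF y_deriv])

lemma y'_component_deriv:
  "t \<in> {0..1} \<Longrightarrow> ((\<lambda>t. y' t $ i) has_real_derivative y'' t $ i) (at t within {0..1})"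
  by (rule has_vector_derivative_vec_nth[OF y'_deriv])

lemma y''_eq: "t \<in> {0..1} \<Longrightarrow> y'' t $ i = - (y' t $ i) * s t - lam"
  using ode[of t i] unfolding s_def by linarith

lemma P_deriv: "t \<in> {0..1} \<Longrightarrow> (P has_real_derivative s t) (at t within {0..1})"
  unfolding P_def[abs_def] s_def using y_component_deriv
  by (auto intro!: derivative_eq_intros simp: mult.commute)

lemma s_deriv:
  assumes "t \<in> {0..1}"
  shows "(s has_real_derivative (- ((s t)^2) - D * lam)) (at t within {0..1})"
proof -
  have "(\<Sum>k\<in>UNIV. real (d k) * y'' t $ k) = (\<Sum>k\<in>UNIV. - s t * (real (d k) * y' t $ k) - lam * real (d k))"
    by (rule sum.cong) (auto simp: y''_eq[OF assms] algebra_simps)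
  also have "\<dots> = - ((s t)^2) - D * lam"
    by (simp add: sum_subtractf sum_negf sum_distrib_left[symmetric] s_def D_eq_sum power2_eq_square)
  finally have "(\<Sum>k\<in>UNIV. real (d k) * y'' t $ k) = - ((s t)^2) - D * lam" .
  moreover have "(s has_real_derivative (\<Sum>k\<in>UNIV. real (d k) * y'' t $ k)) (at t within {0..1})"
    unfolding s_def[abs_def] using y'_component_deriv[OF assms]
    by (auto intro!: derivative_eq_intros simp: mult.commute)
  ultimately show ?thesis by simp
qed

lemma Q_deriv:
  assumes "t \<in> {0..1}"
  shows "(Q has_real_derivative - (2 * s t * Q t)) (at t within {0..1})"
proof -
  have "(\<Sum>i\<in>UNIV. real (d i) * (2 * y' t $ i * y'' t $ i))
      = (\<Sum>i\<in>UNIV. - 2 * s t * (real (d i) * (y' t $ i)^2) - 2 * lam * (real (d i) * y' t $ i))"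
    by (rule sum.cong) (auto simp: y''_eq[OF assms] algebra_simps power2_eq_square)
  also have "\<dots> = - 2 * s t * (\<Sum>i\<in>UNIV. real (d i) * (y' t $ i)^2) - 2 * lam * s t"
    by (simp add: sum_subtractf sum_negf sum_distrib_left[symmetric] s_def)
  finally have "(\<Sum>i\<in>UNIV. real (d i) * (2 * y' t $ i * y'' t $ i))
      - 2 * s t * (- ((s t)^2) - D * lam) = - (2 * s t * Q t)"
    by (simp add: Q_def algebra_simps power2_eq_square)
  moreover have "(Q has_real_derivative (\<Sum>i\<in>UNIV. real (d i) * (2 * y' t $ i * y'' t $ i))
      - 2 * s t * (- ((s t)^2) - D * lam)) (at t within {0..1})"
    unfolding Q_def[abs_def] using y'_component_deriv[OF assms] s_deriv[OF assms]
    by (auto intro!: derivative_eq_intros simp: algebra_simps)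
  ultimately show ?thesis by simp
qed

lemma Q_0: "Q 0 = 0"
proof -
  have "(\<Sum>i\<in>UNIV. real (d i) * (y' 0 $ i * s 0)) = s 0 * s 0"
    by (simp add: sum_distrib_right[symmetric] mult.assoc[symmetric] s_def)
  then have "(\<Sum>i\<in>UNIV. real (d i) * (- (y' 0 $ i) * s 0 + (y' 0 $ i)^2))
      = (\<Sum>i\<in>UNIV. real (d i) * (y' 0 $ i)^2) - (s 0)^2"
    by (simp add: algebra_simps sum_subtractf power2_eq_square)
  then show ?thesis
    using boundary_0 unfolding Q_def D_def s_def by simp
qed

lemma Q_eq_0:
  assumes "t \<in> {0..1}"
  shows "Q t = 0"
proof -
  have "Q t * exp (2 * P t) = Q 0 * exp (2 * P 0)"
    by (rule linear_ode_exp_invariant[where S = "{0..1}" and a = "\<lambda>t. 2 * s t"])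
      (use assms in \<open>auto intro!: Q_deriv P_deriv derivative_eq_intros\<close>)
  then show ?thesis by (simp add: Q_0)
qed

lemma weighted_sum_sq_y':
  assumes "t \<in> {0..1}"
  shows "(\<Sum>i\<in>UNIV. real (d i) * (y' t $ i)^2) = (s t)^2 + (D - 1) * lam"
  using Q_eq_0[OF assms] unfolding Q_def by linarith

lemma u_deriv:
  assumes "t \<in> {0..1}"
  shows "(u i has_real_derivative - (s t * u i t)) (at t within {0..1})"
proof -
  have "(u i has_real_derivative D * y'' t $ i - (- ((s t)^2) - D * lam)) (at t within {0..1})"
    unfolding u_def[abs_def] using y'_component_deriv[OF assms] s_deriv[OF assms]
    by (auto intro!: derivative_eq_intros)
  moreover have "D * y'' t $ i - (- ((s t)^2) - D * lam) = - (s t * u i t)"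
    unfolding u_def y''_eq[OF assms] by (simp add: algebra_simps power2_eq_square)
  ultimately show ?thesis by simp
qed

lemma sgn_u_0_mult:
  assumes "t \<in> {0..1}"
  shows "sgn (u i 0) * u i t = \<bar>u i t\<bar>"
proof -
  have "u i t * exp (P t) = u i 0 * exp (P 0)"
    by (rule linear_ode_exp_invariant[where S = "{0..1}" and a = s])
      (use assms in \<open>auto intro: u_deriv P_deriv\<close>)
  then have "u i t = u i 0 * (exp (P 0) / exp (P t))" by (simp add: field_simps)
  moreover have "exp (P 0) / exp (P t) > 0" by simp
  ultimately show ?thesis
    by (cases "u i 0 > 0"; cases "u i 0 < 0") (auto simp: abs_mult sgn_if)
qed

lemma G_deriv:
  assumes "t \<in> {0..1}"
  shows "(G has_real_derivative g t) (at t within {0..1})"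
proof -
  have "(G has_real_derivative (\<Sum>i\<in>UNIV. real (d i) * sgn (u i 0) * u i t)) (at t within {0..1})"
    unfolding G_def[abs_def] u_def using y_component_deriv[OF assms] P_deriv[OF assms]
    by (auto intro!: derivative_eq_intros sum.cong simp: algebra_simps)
  then show ?thesis
    by (simp add: g_def mult.assoc sgn_u_0_mult[OF assms])
qed

lemma g_nonneg: "0 \<le> g t"
  unfolding g_def by (auto intro!: sum_nonneg)

lemma weighted_sum_sq_u:
  assumes "t \<in> {0..1}"
  shows "(\<Sum>i\<in>UNIV. real (d i) * (u i t)^2) = D * (D - 1) * ((s t)^2 + D * lam)"
proof -
  have "(\<Sum>i\<in>UNIV. real (d i) * (u i t)^2) = (\<Sum>i\<in>UNIV. D^2 * (real (d i) * (y' t $ i)^2)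
      - 2 * D * s t * (real (d i) * y' t $ i) + (s t)^2 * real (d i))"
    unfolding u_def by (rule sum.cong) (auto simp: algebra_simps power2_eq_square)
  also have "\<dots> = D^2 * ((s t)^2 + (D - 1) * lam) - 2 * D * s t * s t + (s t)^2 * D"
    by (simp add: sum.distrib sum_subtractf sum_distrib_left[symmetric] s_def[symmetric] D_eq_sum
        weighted_sum_sq_y'[OF assms])
  finally show ?thesis by (simp add: algebra_simps power2_eq_square)
qed

lemma s_sq_add_nonneg:
  assumes "t \<in> {0..1}"
  shows "0 \<le> (s t)^2 + D * lam"
proof -
  have "0 \<le> (\<Sum>i\<in>UNIV. real (d i) * (u i t)^2)"
    by (intro sum_nonneg) simp
  then have "0 \<le> D * (D - 1) * ((s t)^2 + D * lam)"
    by (simp only: weighted_sum_sq_u[OF assms])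
  moreover have "0 < D * (D - 1)" using D_ge_2 by simp
  ultimately show ?thesis by (simp add: zero_le_mult_iff)
qed

lemma s_sq_add_le_g_sq:
  assumes "t \<in> {0..1}"
  shows "(s t)^2 + D * lam \<le> (g t)^2"
proof -
  have "1 * 1 \<le> D * (D - 1)" using D_ge_2 by (intro mult_mono) auto
  then have "(s t)^2 + D * lam \<le> D * (D - 1) * ((s t)^2 + D * lam)"
    using mult_right_mono[OF _ s_sq_add_nonneg[OF assms]] by fastforce
  also have "\<dots> = (\<Sum>i\<in>UNIV. real (d i) * (u i t)^2)"
    by (rule weighted_sum_sq_u[OF assms, symmetric])
  also have "\<dots> \<le> (\<Sum>i\<in>UNIV. (real (d i) * \<bar>u i t\<bar>)^2)"
  proof (rule sum_mono)
    fix i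
    have "real (d i) * (u i t)^2 \<le> real (d i) * real (d i) * (u i t)^2"
      using d_pos[of i] by (intro mult_right_mono) auto
    then show "real (d i) * (u i t)^2 \<le> (real (d i) * \<bar>u i t\<bar>)^2"
      by (simp add: power2_eq_square algebra_simps)
  qed
  also have "\<dots> \<le> (g t)^2"
  proof -
    have "L2_set (\<lambda>i. real (d i) * \<bar>u i t\<bar>) UNIV \<le> g t"
      unfolding g_def by (rule L2_set_le_sum) simp
    then show ?thesis unfolding L2_set_def by (rule sqrt_le_D)
  qed
  finally show ?thesis .
qed

end

definition lam_bound :: "real \<Rightarrow> real \<Rightarrow> real" where
  "lam_bound \<delta> \<beta> = \<delta> * \<beta>^2 + (2 * \<delta>^2 * \<beta>)^2"

definition slope_exponent :: "real \<Rightarrow> real \<Rightarrow> real" where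
  "slope_exponent \<delta> \<beta> =
    2 * (1 + \<delta> * lam_bound \<delta> \<beta>) * (2 * \<delta>^2 * \<beta> + sqrt (\<delta> * lam_bound \<delta> \<beta>))"

definition slope_bound :: "real \<Rightarrow> real \<Rightarrow> real" where
  "slope_bound \<delta> \<beta> =
    sqrt ((1 + (\<delta> * \<beta>)^2) * exp (slope_exponent \<delta> \<beta>) + \<delta> * lam_bound \<delta> \<beta>)"

locale bvp_solution_bounded = bvp_solution +
  fixes B :: real
  assumes increment_le: "norm (y 1 - y 0) \<le> B"
begin

lemma component_increment_le: "\<bar>y 1 $ i - y 0 $ i\<bar> \<le> B"
  using component_le_norm_cart[of "y 1 - y 0" i] increment_le by simp

lemma P_increment_le: "\<bar>P 1 - P 0\<bar> \<le> D * B"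
proof -
  have "P 1 - P 0 = (\<Sum>k\<in>UNIV. real (d k) * (y 1 $ k - y 0 $ k))"
    unfolding P_def by (simp add: sum_subtractf right_diff_distrib)
  also have "\<bar>\<dots>\<bar> \<le> (\<Sum>k\<in>UNIV. \<bar>real (d k) * (y 1 $ k - y 0 $ k)\<bar>)"
    by (rule sum_abs)
  also have "\<dots> \<le> (\<Sum>k\<in>UNIV. real (d k) * B)"
    by (rule sum_mono) (simp add: abs_mult component_increment_le mult_left_mono)
  also have "\<dots> = D * B"
    by (simp add: D_eq_sum sum_distrib_right)
  finally show ?thesis .
qed

lemma G_mono: "0 \<le> a \<Longrightarrow> a \<le> b \<Longrightarrow> b \<le> 1 \<Longrightarrow> G a \<le> G b"
  by (rule deriv_nonneg_imp_le[of a b "{0..1}" G g]) (auto intro: G_deriv g_nonneg)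

lemma G_increment_le:
  assumes "0 \<le> a" "a \<le> b" "b \<le> 1"
  shows "G b - G a \<le> 2 * D^2 * B"
proof -
  have "sgn (u i 0) * (D * (y 1 $ i - y 0 $ i) - (P 1 - P 0)) \<le> 2 * D * B" for i
  proof -
    let ?X = "D * (y 1 $ i - y 0 $ i) - (P 1 - P 0)"
    have "sgn (u i 0) * ?X \<le> \<bar>?X\<bar>" by (auto simp: sgn_if)
    also have "\<dots> \<le> D * \<bar>y 1 $ i - y 0 $ i\<bar> + \<bar>P 1 - P 0\<bar>"
      using D_ge_2 abs_triangle_ineq4[of "D * (y 1 $ i - y 0 $ i)" "P 1 - P 0"] by (simp add: abs_mult)
    also have "\<dots> \<le> D * B + D * B"
      using mult_left_mono[OF component_increment_le[of i], of D] P_increment_le D_ge_2 by linarith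
    finally show ?thesis by (simp add: algebra_simps)
  qed
  then have "(\<Sum>i\<in>UNIV. real (d i) * (sgn (u i 0) * (D * (y 1 $ i - y 0 $ i) - (P 1 - P 0))))
      \<le> (\<Sum>i\<in>UNIV. real (d i) * (2 * D * B))"
    by (intro sum_mono mult_left_mono) auto
  moreover have "G 1 - G 0
      = (\<Sum>i\<in>UNIV. real (d i) * (sgn (u i 0) * (D * (y 1 $ i - y 0 $ i) - (P 1 - P 0))))"
    unfolding G_def by (simp add: sum_subtractf[symmetric] algebra_simps)
  ultimately have "G 1 - G 0 \<le> (\<Sum>i\<in>UNIV. real (d i) * (2 * D * B))"
    by simp
  also have "\<dots> = 2 * D^2 * B"
    by (simp add: D_eq_sum[symmetric] sum_distrib_right[symmetric] power2_eq_square)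
  finally show ?thesis
    using G_mono[of 0 a] G_mono[of b 1] assms by simp
qed

lemma s_small_somewhere:
  obtains \<xi> where "\<xi> \<in> {0..1}" and "\<bar>s \<xi>\<bar> \<le> D * B"
proof -
  have "(P has_derivative (\<lambda>h. s x * h)) (at x within {0..1})" if "0 \<le> x" "x \<le> 1" for x
    using P_deriv that by (simp add: has_field_derivative_def)
  then obtain \<xi> where "\<xi> \<in> {0..1}" "P 1 - P 0 = s \<xi> * (1 - 0)"
    using mvt_very_simple[of 0 1 P "\<lambda>x h. s x * h"] by auto
  then show thesis using that P_increment_le by auto
qed

lemma lam_ge: "- (D * B^2) \<le> lam"
proof -
  obtain \<xi> where \<xi>: "\<xi> \<in> {0..1}" "\<bar>s \<xi>\<bar> \<le> D * B" by (rule s_small_somewhere)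
  have "(s \<xi>)^2 \<le> D * (D * B^2)"
    using power_mono[OF \<xi>(2) abs_ge_zero, of 2] by (simp add: power2_eq_square ac_simps)
  then have "D * (- (D * B^2)) \<le> D * lam"
    using s_sq_add_nonneg[OF \<xi>(1)] by simp
  then show ?thesis
    using mult_le_cancel_left_pos[of D "- (D * B^2)" lam] D_ge_2 by simp
qed

lemma lam_le: "lam \<le> (2 * D^2 * B)^2"
proof (cases "lam \<le> 0")
  case True
  then show ?thesis using zero_le_power2[of "2 * D^2 * B"] by linarith
next
  case False
  have sqrt_le_g: "\<bar>sqrt lam\<bar> \<le> g t" if "t \<in> {0..1}" for t
  proof -
    have "lam \<le> D * lam" using False D_ge_2 by simp
    then have "lam \<le> (g t)^2"
      using s_sq_add_le_g_sq[OF that] zero_le_power2[of "s t"] by linarith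
    then show ?thesis using False g_nonneg[of t] by (simp add: real_le_lsqrt)
  qed
  have "\<bar>sqrt lam * 1 - sqrt lam * 0\<bar> \<le> G 1 - G 0"
    by (rule abs_increment_le_increment[of 0 1 "{0..1}" "\<lambda>t. sqrt lam * t" "\<lambda>_. sqrt lam" G g])
      (auto intro!: derivative_eq_intros G_deriv sqrt_le_g)
  then have "sqrt lam \<le> 2 * D^2 * B" using G_increment_le[of 0 1] by simp
  then show ?thesis by (rule sqrt_le_D)
qed

lemma abs_lam_le: "\<bar>lam\<bar> \<le> lam_bound D B"
proof -
  have "0 \<le> D * B^2" using D_ge_2 by simp
  then show ?thesis using lam_ge lam_le zero_le_power2[of "2 * D^2 * B"]
    unfolding lam_bound_def by linarith
qed

lemma lam_bound_nonneg: "0 \<le> lam_bound D B"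
  using order_trans[OF abs_ge_zero abs_lam_le] .

lemma abs_s_le:
  assumes "t \<in> {0..1}"
  shows "\<bar>s t\<bar> \<le> g t + sqrt (D * lam_bound D B)"
proof -
  let ?A = "sqrt (D * lam_bound D B)"
  have DL: "0 \<le> D * lam_bound D B"
    using lam_bound_nonneg D_ge_2 by simp
  then have A_sq: "?A^2 = D * lam_bound D B"
    by simp
  have "\<bar>D * lam\<bar> \<le> D * lam_bound D B"
    using mult_left_mono[OF abs_lam_le, of D] D_ge_2 by (simp add: abs_mult)
  then have "\<bar>s t\<bar>^2 \<le> (g t)^2 + ?A^2"
    using s_sq_add_le_g_sq[OF assms] unfolding power2_abs A_sq by linarith
  also have "\<dots> \<le> (g t + ?A)^2"
    using mult_nonneg_nonneg[OF g_nonneg[of t] real_sqrt_ge_zero[OF DL]]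
    unfolding power2_sum A_sq by simp
  finally show ?thesis
    by (rule power2_le_imp_le) (use add_nonneg_nonneg[OF g_nonneg real_sqrt_ge_zero[OF DL]] in simp)
qed

lemma ln_one_add_s_sq_le:
  assumes "t \<in> {0..1}"
  shows "ln (1 + (s t)^2) \<le> ln (1 + (D * B)^2) + slope_exponent D B"
proof -
  define L where "L = lam_bound D B"
  define A where "A = sqrt (D * L)"
  define c where "c = 2 * (1 + D * L)"
  define \<phi> where "\<phi> t = ln (1 + (s t)^2)" for t
  define \<phi>' where "\<phi>' t = 2 * s t * (- ((s t)^2) - D * lam) / (1 + (s t)^2)" for t
  define H where "H t = c * G t + c * A * t" for t
  have DL: "0 \<le> D * L" "\<bar>D * lam\<bar> \<le> D * L"
    using abs_lam_le D_ge_2 mult_left_mono[OF abs_lam_le, of D] by (auto simp: L_def abs_mult)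
  have A_c: "0 \<le> A" "0 \<le> c" using DL by (auto simp: A_def c_def)
  have pos: "0 < 1 + (s x)^2" for x by (simp add: add_pos_nonneg)
  have \<phi>_deriv: "(\<phi> has_real_derivative \<phi>' x) (at x within {0..1})" if "x \<in> {0..1}" for x
  proof -
    have "((\<lambda>x. 1 + (s x)^2) has_real_derivative 2 * s x * (- ((s x)^2) - D * lam)) (at x within {0..1})"
      using s_deriv[OF that] by (auto intro!: derivative_eq_intros)
    from DERIV_chain2[OF DERIV_ln_divide[OF pos[of x]] this]
    show ?thesis unfolding \<phi>_def[abs_def] \<phi>'_def by simp
  qed
  have H_deriv: "(H has_real_derivative c * g x + c * A) (at x within {0..1})" if "x \<in> {0..1}" for x
    unfolding H_def[abs_def] using G_deriv[OF that] by (auto intro!: derivative_eq_intros)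
  have \<phi>'_le: "\<bar>\<phi>' x\<bar> \<le> c * g x + c * A" if "x \<in> {0..1}" for x
  proof -
    have "0 \<le> D * L * (s x)^2" using DL by simp
    then have "\<bar>(s x)^2 + D * lam\<bar> \<le> (1 + D * L) * (1 + (s x)^2)"
      using abs_triangle_ineq[of "(s x)^2" "D * lam"] DL by (simp add: algebra_simps)
    then have q: "\<bar>(s x)^2 + D * lam\<bar> / (1 + (s x)^2) \<le> 1 + D * L"
      using pos[of x] by (simp add: divide_le_eq)
    have "\<phi>' x = - (2 * s x * (((s x)^2 + D * lam) / (1 + (s x)^2)))"
      using pos[of x] unfolding \<phi>'_def by (simp add: field_simps)
    then have "\<bar>\<phi>' x\<bar> = 2 * \<bar>s x\<bar> * (\<bar>(s x)^2 + D * lam\<bar> / (1 + (s x)^2))"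
      using pos[of x] by (simp add: abs_mult abs_divide)
    also have "\<dots> \<le> 2 * \<bar>s x\<bar> * (1 + D * L)"
      by (rule mult_left_mono[OF q]) simp
    also have "\<dots> = c * \<bar>s x\<bar>"
      by (simp add: c_def)
    also have "\<dots> \<le> c * (g x + A)"
      using abs_s_le[OF that] A_c by (simp add: A_def L_def mult_left_mono)
    finally show ?thesis by (simp add: algebra_simps)
  qed
  have \<phi>_increment: "\<bar>\<phi> b - \<phi> a\<bar> \<le> slope_exponent D B"
    if "0 \<le> a" "a \<le> b" "b \<le> 1" for a b
  proof -
    have "\<bar>\<phi> b - \<phi> a\<bar> \<le> H b - H a"
      by (rule abs_increment_le_increment[of a b "{0..1}" \<phi> \<phi>' H "\<lambda>x. c * g x + c * A"])
        (use that \<phi>_deriv H_deriv \<phi>'_le in auto)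
    also have "\<dots> = c * (G b - G a) + c * A * (b - a)"
      by (simp add: H_def algebra_simps)
    also have "\<dots> \<le> c * (2 * D^2 * B) + c * A * 1"
      using G_increment_le[OF that] that A_c by (intro add_mono mult_left_mono) auto
    also have "\<dots> = slope_exponent D B"
      by (simp add: slope_exponent_def c_def A_def L_def algebra_simps)
    finally show ?thesis .
  qed
  obtain \<xi> where \<xi>: "\<xi> \<in> {0..1}" "\<bar>s \<xi>\<bar> \<le> D * B" by (rule s_small_somewhere)
  have "\<bar>\<phi> t - \<phi> \<xi>\<bar> \<le> slope_exponent D B"
    using \<phi>_increment[of \<xi> t] \<phi>_increment[of t \<xi>] assms \<xi>(1)
    by (cases "\<xi> \<le> t") (auto simp: abs_minus_commute)
  moreover have "\<phi> \<xi> \<le> ln (1 + (D * B)^2)"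
  proof -
    have "(s \<xi>)^2 \<le> (D * B)^2"
      using power_mono[OF \<xi>(2) abs_ge_zero, of 2] by simp
    then show ?thesis unfolding \<phi>_def using pos[of \<xi>] by simp
  qed
  ultimately show ?thesis unfolding \<phi>_def by linarith
qed

lemma norm_y'_le:
  assumes "t \<in> {0..1}"
  shows "norm (y' t) \<le> slope_bound D B"
proof -
  have "(norm (y' t))^2 = (\<Sum>i\<in>UNIV. (y' t $ i)^2)"
    by (simp add: norm_vec_def L2_set_def sum_nonneg)
  also have "\<dots> \<le> (\<Sum>i\<in>UNIV. real (d i) * (y' t $ i)^2)"
  proof (rule sum_mono)
    fix i
    have "1 \<le> real (d i)" using d_pos[of i] by simp
    from mult_right_mono[OF this zero_le_power2[of "y' t $ i"]]
    show "(y' t $ i)^2 \<le> real (d i) * (y' t $ i)^2" by simp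
  qed
  also have "\<dots> = (s t)^2 + (D - 1) * lam"
    by (rule weighted_sum_sq_y'[OF assms])
  also have "\<dots> \<le> (1 + (D * B)^2) * exp (slope_exponent D B) + D * lam_bound D B"
  proof -
    have "1 + (s t)^2 = exp (ln (1 + (s t)^2))"
      by (simp add: add_pos_nonneg)
    also have "\<dots> \<le> exp (ln (1 + (D * B)^2) + slope_exponent D B)"
      using ln_one_add_s_sq_le[OF assms] by simp
    finally have "1 + (s t)^2 \<le> exp (ln (1 + (D * B)^2) + slope_exponent D B)" .
    moreover have "(D - 1) * lam \<le> (D - 1) * lam_bound D B"
      using abs_lam_le D_ge_2 by (intro mult_left_mono) auto
    moreover have "(D - 1) * lam_bound D B \<le> D * lam_bound D B"
      using abs_lam_le abs_ge_zero[of lam] by (simp add: algebra_simps)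
    ultimately show ?thesis by (simp add: exp_add add_pos_nonneg)
  qed
  finally show ?thesis
    unfolding slope_bound_def by (rule real_le_rsqrt)
qed

lemma norm_y_le:
  assumes "t \<in> {0..1}"
  shows "norm (y t) \<le> norm (y 0) + slope_bound D B"
proof -
  have "norm (y t - y 0) \<le> slope_bound D B * norm (t - 0)"
  proof (rule differentiable_bound[of "{0..1}" y "\<lambda>x h. h *\<^sub>R y' x"])
    fix x :: real assume "x \<in> {0..1}"
    then show "(y has_derivative (\<lambda>h. h *\<^sub>R y' x)) (at x within {0..1})"
      using y_deriv by (simp add: has_vector_derivative_def)
    show "onorm (\<lambda>h. h *\<^sub>R y' x) \<le> slope_bound D B"
      using norm_y'_le[OF \<open>x \<in> {0..1}\<close>] by (simp add: onorm_scaleR_left[OF bounded_linear_ident] onorm_id)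
  qed (use assms in auto)
  moreover have "slope_bound D B * t \<le> slope_bound D B"
    using assms order_trans[OF norm_ge_zero norm_y'_le[of 0]] by (simp add: mult_left_le)
  ultimately have "norm (y t - y 0) \<le> slope_bound D B"
    using assms by simp
  then show ?thesis
    using norm_triangle_sub[of "y t" "y 0"] by linarith
qed

lemma pnorm_le: "pnorm (lam, y) \<le> lam_bound D B + norm (y 0) + 2 * slope_bound D B"
proof -
  have "(SUP t\<in>{0..1}. norm (y t)) \<le> norm (y 0) + slope_bound D B"
    by (rule cSUP_least) (auto intro: norm_y_le)
  moreover have "(SUP t\<in>{0..1}. norm (vector_derivative y (at t within {0..1}))) \<le> slope_bound D B"
    by (rule cSUP_least) (auto simp: vector_derivative_within_unit_interval[OF y_deriv] intro: norm_y'_le)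
  ultimately show ?thesis
    using abs_lam_le unfolding pnorm_def c1norm_def by simp
qed

end

definition solution_radius :: "('n::finite \<Rightarrow> nat) \<Rightarrow> real ^ 'n \<Rightarrow> real ^ 'n \<Rightarrow> real"
  where
  "solution_radius d c0 c1 =
    lam_bound (real (\<Sum>i\<in>UNIV. d i)) (norm (c1 - c0)) + norm c0
    + 2 * slope_bound (real (\<Sum>i\<in>UNIV. d i)) (norm (c1 - c0)) + 1"

lemma (in bvp_solution) solution_in_pball:
  assumes "C1 y" and "p \<in> {0..1}" and "y 0 = p *\<^sub>R c0" and "y 1 = p *\<^sub>R c1"
  shows "(lam, y) \<in> pball (solution_radius d c0 c1)"
proof -
  have "norm (y 1 - y 0) \<le> norm (c1 - c0)" and "norm (y 0) \<le> norm c0"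
    using assms(2-4) by (auto simp: mult_left_le_one_le simp flip: scaleR_diff_right)
  then interpret bvp_solution_bounded d lam y y' y'' "norm (c1 - c0)"
    by unfold_locales
  have "pnorm (lam, y) < solution_radius d c0 c1"
    using pnorm_le \<open>norm (y 0) \<le> norm c0\<close> by (simp add: solution_radius_def D_def)
  then show ?thesis
    using assms(1) by (simp add: pball_def space_def)
qed

theorem lemma4p3:
  fixes d :: "'n::finite \<Rightarrow> nat" and c0 c1 :: "real ^ 'n"
  assumes "\<And>i. d i > 0"
    and "(\<Sum>i\<in>UNIV. d i) \<ge> 2"
  shows "\<exists>\<Omega>::(real \<times> (real \<Rightarrow> real ^ 'n)) set.
           \<Omega> \<subseteq> space \<and> bounded_X \<Omega> \<and> convex_X \<Omega> \<and> open_X \<Omega> \<and>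
           (\<forall>lam y p3 y' y''.
              C1 y \<and> p3 \<in> {0..1} \<and>
              (\<forall>t\<in>{0..1}. (y has_vector_derivative y' t) (at t within {0..1})) \<and>
              (\<forall>t\<in>{0..1}. (y' has_vector_derivative y'' t) (at t within {0..1})) \<and>
              continuous_on {0..1} y'' \<and>
              (\<Sum>i\<in>UNIV. real (d i) *
                  (- (y' 0 $ i) * (\<Sum>k\<in>UNIV. real (d k) * y' 0 $ k) + (y' 0 $ i)^2))
                = (real (\<Sum>i\<in>UNIV. d i) - 1) * lam \<and>
              (\<forall>t\<in>{0..1}. \<forall>i.
                  - (y' t $ i) * (\<Sum>k\<in>UNIV. real (d k) * y' t $ k) - y'' t $ i = lam) \<and>
              y 0 = p3 *\<^sub>R c0 \<and> y 1 = p3 *\<^sub>R c1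
              \<longrightarrow> (lam, y) \<in> \<Omega>)"
  apply (intro exI[of _ "pball (solution_radius d c0 c1)"] conjI allI impI
      bounded_X_pball convex_X_pball open_X_pball)
   apply (auto simp: pball_def)[1]
  apply (elim conjE)
  subgoal for lam y p3 y' y''
    using assms
    by (intro bvp_solution.solution_in_pball[where y' = y' and y'' = y'' and p = p3])
      (auto simp: bvp_solution_def)
  done

end
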